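(* For $n\ge 1$ and all integers $k$, the numbers $T(n,k)$ satisfy $$T(n,k)=\lceil k/2\rceil T(n-1,k)+T(n-1,k-1)+(n-k+1)T(n-1,k-2),$$ with initial conditions $T(0,0)=1$ and $T(0,k)=0$ for $k\ne 0$.
   Context: For a permutation $\pi$ of $[n]=\{1,\dots,n\}$, a double descent is an index $i\in[n-2]$ with $\pi(i)>\pi(i+1)>\pi(i+2)$; $\pi$ is simsun if for every $k\in[n]$ the subword of $\pi$ consisting of the letters in $[k]$ (in order of appearance) has no double descents. Let $\mathcal{RS}_n$ be the set of simsun permutations of $[n]$. The number of up-down runs ${\rm uprun}(\pi)$ is the number of alternating runs of the sequence $0,\pi(1),\pi(2),\dots,\pi(n)$, i.e. one plus the number of interior positions of this sequence at which it changes direction (from increasing to decreasing or vice versa). Let $T(n,k)=\#\{\pi\in\mathcal{RS}_n:{\rm uprun}(\pi)=k\}$ for $n\ge1$ (and $T(n,k)=0$ for $k<0$). *)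

theory Defs
  imports Complex_Main
begin

definition is_perm :: "nat \<Rightarrow> nat list \<Rightarrow> bool" where
  "is_perm n xs \<longleftrightarrow> distinct xs \<and> set xs = {1..n}"

definition has_double_descent :: "nat list \<Rightarrow> bool" where
  "has_double_descent ys \<longleftrightarrow>
     (\<exists>i. i + 2 < length ys \<and> ys ! i > ys ! (i+1) \<and> ys ! (i+1) > ys ! (i+2))"

definition simsun :: "nat \<Rightarrow> nat list \<Rightarrow> bool" where
  "simsun n xs \<longleftrightarrow> (\<forall>k\<in>{1..n}. \<not> has_double_descent (filter (\<lambda>x. x \<le> k) xs))"

definition RS :: "nat \<Rightarrow> nat list set" where
  "RS n = {xs. is_perm n xs \<and> simsun n xs}"

text \<open>Number of alternating runs of the sequence 0, pi(1), ..., pi(n):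
  one plus the number of interior positions where the direction changes.\<close>

definition uprun :: "nat list \<Rightarrow> nat" where
  "uprun xs = (let s = 0 # xs in
     1 + card {j. 1 \<le> j \<and> j + 1 < length s \<and> ((s!(j-1) < s!j) \<noteq> (s!j < s!(j+1)))})"

definition T :: "nat \<Rightarrow> int \<Rightarrow> int" where
  "T n k = (if n = 0 then (if k = 0 then 1 else 0)
            else if k < 0 then 0
            else int (card {xs \<in> RS n. int (uprun xs) = k}))"

end

theory Submission
  imports Defs "HOL-Library.Multiset"
begin

text \<open>
  Every simsun permutation of \<open>[n+1]\<close> arises in exactly one way from a simsun permutation
  \<open>\<pi>\<close> of \<open>[n]\<close> by inserting \<open>n+1\<close> into one of the \<open>n+1\<close> gaps, subject only to creating no double
  descent. Record the sequence \<open>0, \<pi>(1), \<dots>, \<pi>(n)\<close> by its up-down word (one letter per step,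
  \<open>True\<close> for an ascent): then \<open>uprun \<pi>\<close> is one plus the number of letter changes, absence of
  double descents means no two adjacent descents, and inserting the maximum into a gap replaces
  the step across it by an ascent followed by a descent. An induction on the word shows that if
  \<open>\<pi>\<close> has \<open>u\<close> runs, then \<open>\<lceil>u/2\<rceil>\<close> admissible insertions keep \<open>u\<close> runs, one gives \<open>u+1\<close> runs
  and the remaining \<open>n-u\<close> give \<open>u+2\<close>; summing over \<open>\<pi>\<close> yields the recurrence.
\<close>

section \<open>Up-down words\<close>

fun up_steps :: "nat list \<Rightarrow> bool list" where
  "up_steps (a # b # xs) = (a < b) # up_steps (b # xs)"
| "up_steps _ = []"

fun turns :: "bool list \<Rightarrow> nat" where
  "turns (a # b # w) = (if a = b then 0 else 1) + turns (b # w)"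
| "turns _ = 0"

lemma length_up_steps [simp]: "length (up_steps xs) = length xs - 1"
  by (induction xs rule: up_steps.induct) auto

lemma turns_le_length: "turns w \<le> length w - 1"
  by (induction w rule: turns.induct) auto

lemma has_double_descent_Cons_Cons_Cons:
  "has_double_descent (a # b # c # xs) \<longleftrightarrow> (b < a \<and> c < b) \<or> has_double_descent (b # c # xs)"
proof -
  have ex_split: "(\<exists>i. P i) \<longleftrightarrow> P 0 \<or> (\<exists>i. P (Suc i))" for P :: "nat \<Rightarrow> bool"
    by (metis not0_implies_Suc)
  show ?thesis
    unfolding has_double_descent_def by (subst ex_split) simp
qed

lemma has_double_descent_short: "length xs < 3 \<Longrightarrow> \<not> has_double_descent xs"
  by (simp add: has_double_descent_def)

lemma has_double_descent_Cons_0: "has_double_descent (0 # xs) \<longleftrightarrow> has_double_descent xs"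
proof (cases xs rule: up_steps.cases)
  case (1 b c ys)
  then show ?thesis by (simp add: has_double_descent_Cons_Cons_Cons)
qed (simp_all add: has_double_descent_short)

lemma no_double_descent_iff_successively:
  "distinct xs \<Longrightarrow> \<not> has_double_descent xs \<longleftrightarrow> successively (\<or>) (up_steps xs)"
proof (induction xs rule: induct_list012)
  case (3 a b xs)
  then show ?case
    by (cases xs) (auto simp: has_double_descent_Cons_Cons_Cons linorder_neq_iff,
        auto simp: has_double_descent_def)
qed (auto simp: has_double_descent_def)

lemma no_double_descent_iff_successively_0:
  "distinct (0 # xs) \<Longrightarrow> \<not> has_double_descent xs \<longleftrightarrow> successively (\<or>) (up_steps (0 # xs))"
  using has_double_descent_Cons_0 no_double_descent_iff_successively by metis

lemma uprun_eq_Suc_turns: "uprun xs = Suc (turns (up_steps (0 # xs)))"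
proof -
  have "card {j. 1 \<le> j \<and> j + 1 < length s \<and> ((s!(j-1) < s!j) \<noteq> (s!j < s!(j+1)))}
      = turns (up_steps s)" for s :: "nat list"
  proof (induction s rule: induct_list012)
    case (3 a b s)
    let ?J = "\<lambda>s. {j. 1 \<le> j \<and> j + 1 < length s \<and> ((s!(j-1) < s!j) \<noteq> (s!j < s!(j+1)))}"
    show ?case
    proof (cases s)
      case (Cons c s')
      have split: "?J (a # b # s) = {j. j = 1 \<and> (a < b) \<noteq> (b < c)} \<union> Suc ` ?J (b # s)"
      proof (intro set_eqI iffI)
        fix j assume j: "j \<in> ?J (a # b # s)"
        then obtain i where "j = Suc i" by (cases j) auto
        with j show "j \<in> {j. j = 1 \<and> (a < b) \<noteq> (b < c)} \<union> Suc ` ?J (b # s)"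
          using Cons by (cases i) (auto simp: image_iff)
      qed (use Cons in \<open>auto simp: nth_Cons'\<close>)
      have "finite (?J (b # s))"
        by (rule finite_subset[of _ "{..<length (b # s)}"]) auto
      then have "card (?J (a # b # s)) = card {j::nat. j = 1 \<and> (a < b) \<noteq> (b < c)} + card (Suc ` ?J (b # s))"
        unfolding split by (intro card_Un_disjoint) auto
      then show ?thesis
        using "3.IH"(2) Cons by (simp add: card_image)
    qed auto
  qed auto
  from this[of "0 # xs"] show ?thesis
    unfolding uprun_def Let_def by simp
qed

lemma uprun_le_length: "xs \<noteq> [] \<Longrightarrow> uprun xs \<le> length xs"
  using turns_le_length[of "up_steps (0 # xs)"] by (cases xs) (auto simp: uprun_eq_Suc_turns)

section \<open>Inserting a maximum\<close>

definition insert_at :: "'a \<Rightarrow> nat \<Rightarrow> 'a list \<Rightarrow> 'a list" where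
  "insert_at x j xs = take j xs @ x # drop j xs"

lemma set_insert_at [simp]: "set (insert_at x j xs) = insert x (set xs)"
  by (metis append_take_drop_id insert_at_def list.simps(15) set_append Un_insert_right)

lemma distinct_insert_at: "distinct xs \<Longrightarrow> x \<notin> set xs \<Longrightarrow> distinct (insert_at x j xs)"
proof -
  assume "distinct xs" "x \<notin> set xs"
  then have "distinct (take j xs @ drop j xs)" "x \<notin> set (take j xs @ drop j xs)"
    by simp_all
  then show ?thesis
    unfolding insert_at_def by (auto simp del: append_take_drop_id)
qed

lemma filter_insert_at: "\<not> P x \<Longrightarrow> filter P (insert_at x j xs) = filter P xs"
  unfolding insert_at_def by (metis append_take_drop_id filter.simps(2) filter_append)

lemma inj_on_insert_at: "inj_on (\<lambda>(xs, j). insert_at x j xs) {(xs, j). x \<notin> set xs \<and> j \<le> length xs}"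
proof (rule inj_onI, clarify)
  fix xs j ys i
  assume "x \<notin> set xs" "j \<le> length xs" "x \<notin> set ys" "i \<le> length ys"
    and eq: "insert_at x j xs = insert_at x i ys"
  have "xs = ys"
    using filter_insert_at[of "\<lambda>y. y \<noteq> x" x] eq \<open>x \<notin> set xs\<close> \<open>x \<notin> set ys\<close>
    by (metis (mono_tags, lifting) filter_id_conv)
  moreover have "takeWhile (\<lambda>y. y \<noteq> x) (insert_at x j xs) = take j xs"
    using \<open>x \<notin> set xs\<close> unfolding insert_at_def
    by (subst takeWhile_append2) (auto dest: in_set_takeD)
  moreover have "takeWhile (\<lambda>y. y \<noteq> x) (insert_at x i ys) = take i ys"
    using \<open>x \<notin> set ys\<close> unfolding insert_at_def
    by (subst takeWhile_append2) (auto dest: in_set_takeD)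
  ultimately show "xs = ys \<and> j = i"
    using eq \<open>j \<le> length xs\<close> \<open>i \<le> length ys\<close> by (metis length_take min.absorb2)
qed

lemma up_steps_Cons: "xs \<noteq> [] \<Longrightarrow> up_steps (a # xs) = (a < hd xs) # up_steps xs"
  by (cases xs) auto

text \<open>Entry \<open>i\<close> of \<open>insert_peaks w\<close> is the up-down word obtained when a new maximum is inserted
  into the gap after position \<open>i\<close> of a sequence with up-down word \<open>w\<close>: the step across that gap
  becomes an ascent followed by a descent (an ascent alone in the last gap).\<close>

fun insert_peaks :: "bool list \<Rightarrow> bool list list" where
  "insert_peaks [] = [[True]]"
| "insert_peaks (b # w) = (True # False # w) # map (Cons b) (insert_peaks w)"

lemma length_insert_peaks [simp]: "length (insert_peaks w) = Suc (length w)"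
  by (induction w) auto

lemma up_steps_insert_at_max:
  "\<forall>x\<in>set xs. x < M \<Longrightarrow> i < length xs \<Longrightarrow>
    up_steps (insert_at M (Suc i) xs) = insert_peaks (up_steps xs) ! i"
proof (induction xs arbitrary: i)
  case (Cons a xs)
  show ?case
  proof (cases i)
    case 0
    then show ?thesis
      using Cons.prems by (cases xs) (auto simp: insert_at_def)
  next
    case (Suc i')
    then have "xs \<noteq> []" "i' < length xs"
      using Cons.prems by auto
    moreover have "hd (insert_at M (Suc i') xs) = hd xs"
      using \<open>xs \<noteq> []\<close> by (cases xs) (auto simp: insert_at_def)
    ultimately show ?thesis
      using Cons Suc by (simp add: insert_at_def up_steps_Cons)
  qed
qed simp

lemma map_up_steps_insert_at_max:
  assumes "xs \<noteq> []" "\<forall>x\<in>set xs. x < M"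
  shows "map (\<lambda>j. up_steps (insert_at M (Suc j) xs)) [0..<length xs] = insert_peaks (up_steps xs)"
proof (rule nth_equalityI)
  fix j assume "j < length (map (\<lambda>j. up_steps (insert_at M (Suc j) xs)) [0..<length xs])"
  then show "map (\<lambda>j. up_steps (insert_at M (Suc j) xs)) [0..<length xs] ! j = insert_peaks (up_steps xs) ! j"
    using assms(2) by (simp add: up_steps_insert_at_max del: upt_Suc insert_peaks.simps)
qed (use assms(1) in simp)

lemma insert_peaks_True_Cons: "l \<in> set (insert_peaks (True # w)) \<Longrightarrow> \<exists>r. l = True # r"
  by auto

lemma turns_admissible_insert_peaks_True_True:
  assumes "successively (\<or>) (True # w)"
  shows "map turns (filter (successively (\<or>)) (insert_peaks (True # True # w)))
    = (turns (True # w) + 2) # map turns (filter (successively (\<or>)) (insert_peaks (True # w)))"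
  unfolding insert_peaks.simps(2)[of True "True # w"]
  using assms by (auto simp: filter_map o_def simp del: insert_peaks.simps
      intro!: filter_cong map_cong dest!: insert_peaks_True_Cons)

lemma turns_admissible_insert_peaks_True_False_True:
  assumes "successively (\<or>) (True # w)"
  shows "map turns (filter (successively (\<or>)) (insert_peaks (True # False # True # w)))
    = (turns (True # w) + 2) # map (\<lambda>t. t + 2) (map turns (filter (successively (\<or>)) (insert_peaks (True # w))))"
  unfolding insert_peaks.simps(2)[of True "False # True # w"] insert_peaks.simps(2)[of False "True # w"]
  using assms by (auto simp: filter_map o_def simp del: insert_peaks.simps
      intro!: filter_cong map_cong dest!: insert_peaks_True_Cons)

lemma turns_of_admissible_insert_peaks:
  assumes "successively (\<or>) (True # w)"
  shows "mset (map turns (filter (successively (\<or>)) (insert_peaks (True # w))))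
    = replicate_mset ((turns (True # w) + 2) div 2) (turns (True # w)) + {#turns (True # w) + 1#}
      + replicate_mset (length w - turns (True # w)) (turns (True # w) + 2)"
  using assms
proof (induction w rule: induct_list012)
  case (2 x)
  then show ?case by (cases x) simp_all
next
  case (3 x y zs)
  show ?case
  proof (cases x)
    case True
    define c where "c = turns (True # y # zs)"
    have "successively (\<or>) (True # y # zs)"
      using "3.prems" True by simp
    then have "mset (map turns (filter (successively (\<or>)) (insert_peaks (True # x # y # zs))))
        = add_mset (c + 2) (mset (map turns (filter (successively (\<or>)) (insert_peaks (True # y # zs)))))"
      unfolding c_def by (simp only: turns_admissible_insert_peaks_True_True True mset.simps)
    moreover have "c \<le> length (y # zs)"
      using turns_le_length[of "True # y # zs"] by (simp add: c_def del: turns.simps)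
    moreover have "turns (True # x # y # zs) = c"
      using True by (simp add: c_def)
    ultimately show ?thesis
      using "3.IH"(2) \<open>successively (\<or>) (True # y # zs)\<close> True by (simp add: c_def[symmetric] Suc_diff_le)
  next
    case False
    with "3.prems" have "y" "successively (\<or>) (True # zs)"
      by (simp_all, cases zs) simp_all
    define c where "c = turns (True # zs)"
    have "mset (map turns (filter (successively (\<or>)) (insert_peaks (True # x # y # zs))))
        = add_mset (c + 2) (image_mset (\<lambda>t. t + 2) (mset (map turns (filter (successively (\<or>)) (insert_peaks (True # zs))))))"
      using \<open>successively (\<or>) (True # zs)\<close> False \<open>y\<close> unfolding c_def
      by (simp only: turns_admissible_insert_peaks_True_False_True False \<open>y\<close> mset.simps mset_map)
    also have "\<dots> = add_mset (c + 2) (image_mset (\<lambda>t. t + 2)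
        (replicate_mset ((c + 2) div 2) c + {#c + 1#} + replicate_mset (length zs - c) (c + 2)))"
      using "3.IH"(1) \<open>successively (\<or>) (True # zs)\<close> by (simp only: c_def)
    finally have "mset (map turns (filter (successively (\<or>)) (insert_peaks (True # x # y # zs))))
        = add_mset (c + 2) (image_mset (\<lambda>t. t + 2)
          (replicate_mset ((c + 2) div 2) c + {#c + 1#} + replicate_mset (length zs - c) (c + 2)))" .
    moreover have "turns (True # x # y # zs) = c + 2"
      using False \<open>y\<close> by (simp add: c_def)
    ultimately show ?thesis
      by simp
  qed
qed simp

section \<open>Simsun permutations\<close>

lemma RS_length: "xs \<in> RS n \<Longrightarrow> length xs = n"
  unfolding RS_def is_perm_def using distinct_card by fastforce

lemma finite_RS: "finite (RS n)"
proof (rule finite_subset)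
  show "RS n \<subseteq> {xs. set xs \<subseteq> {1..n} \<and> length xs = n}"
    using RS_length by (auto simp: RS_def is_perm_def)
  show "finite {xs. set xs \<subseteq> {1..n} \<and> length xs = n}"
    by (rule finite_lists_length_eq) simp
qed

lemma RS_no_double_descent: "xs \<in> RS n \<Longrightarrow> \<not> has_double_descent xs"
proof (cases "n = 0")
  case False
  assume xs: "xs \<in> RS n"
  then have "filter (\<lambda>x. x \<le> n) xs = xs"
    by (auto simp: RS_def is_perm_def filter_id_conv)
  with xs False show ?thesis
    by (auto simp: RS_def simsun_def dest: bspec[of _ _ n])
qed (auto simp: RS_def is_perm_def has_double_descent_def)

lemma insert_at_max_in_RS:
  assumes "s \<in> RS n" "\<not> has_double_descent (insert_at (Suc n) j s)"
  shows "insert_at (Suc n) j s \<in> RS (Suc n)"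
proof -
  have s: "distinct s" "set s = {1..n}"
    using assms(1) by (auto simp: RS_def is_perm_def)
  have "is_perm (Suc n) (insert_at (Suc n) j s)"
    using s by (auto simp: is_perm_def distinct_insert_at)
  moreover have "\<not> has_double_descent (filter (\<lambda>x. x \<le> k) (insert_at (Suc n) j s))"
    if "k \<in> {1..Suc n}" for k
  proof (cases "k = Suc n")
    case True
    then have "filter (\<lambda>x. x \<le> k) (insert_at (Suc n) j s) = insert_at (Suc n) j s"
      using s by (auto simp: filter_id_conv)
    then show ?thesis
      using assms(2) by simp
  next
    case False
    then show ?thesis
      using that assms(1) by (simp add: filter_insert_at RS_def simsun_def)
  qed
  ultimately show ?thesis
    by (simp add: RS_def simsun_def)
qed

lemma RS_Suc_obtain_insert_at:
  assumes "p \<in> RS (Suc n)"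
  obtains s j where "s \<in> RS n" "j \<le> n" "p = insert_at (Suc n) j s"
proof -
  have p: "distinct p" "set p = {1..Suc n}"
    using assms by (auto simp: RS_def is_perm_def)
  then have "Suc n \<in> set p"
    by simp
  then obtain as bs where p_eq: "p = as @ Suc n # bs"
    by (meson split_list)
  define s where "s = as @ bs"
  have "p = insert_at (Suc n) (length as) s"
    by (simp add: insert_at_def s_def p_eq)
  moreover have "s \<in> RS n"
  proof -
    have "distinct s" "Suc n \<notin> set s"
      using p(1) by (simp_all add: p_eq s_def)
    moreover have "set s = set p - {Suc n}"
      using \<open>Suc n \<notin> set s\<close> by (auto simp: p_eq s_def)
    then have "set s = {1..n}"
      using p(2) by (simp add: atLeastAtMostSuc_conv)
    moreover have "filter (\<lambda>x. x \<le> k) s = filter (\<lambda>x. x \<le> k) p" if "k \<le> n" for k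
      using that \<open>p = insert_at (Suc n) (length as) s\<close> by (simp add: filter_insert_at)
    ultimately show ?thesis
      using assms by (auto simp: RS_def is_perm_def simsun_def)
  qed
  moreover have "length as \<le> n"
    using RS_length[OF assms] by (simp add: p_eq)
  ultimately show ?thesis
    using that by blast
qed

lemma RS_Suc:
  "RS (Suc n) = (\<lambda>(s, j). insert_at (Suc n) j s) `
    (SIGMA s:RS n. {j. j \<le> n \<and> \<not> has_double_descent (insert_at (Suc n) j s)})"
proof (intro set_eqI iffI)
  fix p assume "p \<in> RS (Suc n)"
  then show "p \<in> (\<lambda>(s, j). insert_at (Suc n) j s) `
      (SIGMA s:RS n. {j. j \<le> n \<and> \<not> has_double_descent (insert_at (Suc n) j s)})"
    by (metis (no_types, lifting) RS_Suc_obtain_insert_at RS_no_double_descent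
        SigmaI case_prod_conv image_eqI mem_Collect_eq)
qed (auto simp: insert_at_max_in_RS)

lemma card_RS_Suc_uprun:
  "card {p \<in> RS (Suc n). uprun p = k} = (\<Sum>s\<in>RS n.
     card {j. j \<le> n \<and> \<not> has_double_descent (insert_at (Suc n) j s) \<and> uprun (insert_at (Suc n) j s) = k})"
proof -
  let ?ins = "\<lambda>(s, j). insert_at (Suc n) j s"
  let ?J = "\<lambda>s. {j. j \<le> n \<and> \<not> has_double_descent (insert_at (Suc n) j s) \<and> uprun (insert_at (Suc n) j s) = k}"
  have "{p \<in> RS (Suc n). uprun p = k} = ?ins ` (SIGMA s:RS n. ?J s)"
    unfolding RS_Suc by auto
  moreover have "inj_on ?ins (SIGMA s:RS n. ?J s)"
  proof (rule inj_on_subset[OF inj_on_insert_at])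
    show "(SIGMA s:RS n. ?J s) \<subseteq> {(s, j). Suc n \<notin> set s \<and> j \<le> length s}"
      by (auto simp: RS_length) (auto simp: RS_def is_perm_def)
  qed
  ultimately show ?thesis
    by (simp add: card_image finite_RS)
qed

lemma uprun_of_max_insertions:
  assumes "s \<in> RS n" "n \<ge> 1"
  shows "mset (map uprun (filter (\<lambda>p. \<not> has_double_descent p)
      (map (\<lambda>j. insert_at (Suc n) j s) [0..<Suc n])))
    = replicate_mset ((uprun s + 1) div 2) (uprun s) + {#uprun s + 1#}
      + replicate_mset (n - uprun s) (uprun s + 2)"
proof -
  let ?ins = "\<lambda>j. insert_at (Suc n) j s"
  have s: "distinct (0 # s)" "set s = {1..n}" "length s = n"
    using assms(1) RS_length by (auto simp: RS_def is_perm_def)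
  have "s \<noteq> []"
    using s(3) assms(2) by auto
  then have "0 < hd s"
    using s(2) hd_in_set by fastforce
  with \<open>s \<noteq> []\<close> have word_s: "up_steps (0 # s) = True # up_steps s"
    by (simp add: up_steps_Cons)
  define c where "c = turns (True # up_steps s)"
  have "map (\<lambda>j. up_steps (0 # ?ins j)) [0..<Suc n] = insert_peaks (up_steps (0 # s))"
    using map_up_steps_insert_at_max[of "0 # s" "Suc n"] s by (simp add: insert_at_def del: upt_Suc)
  moreover have "map uprun (filter (\<lambda>p. \<not> has_double_descent p) (map ?ins [0..<Suc n]))
      = map Suc (map turns (filter (successively (\<or>)) (map (\<lambda>j. up_steps (0 # ?ins j)) [0..<Suc n])))"
  proof -
    have "\<not> has_double_descent (?ins j) \<longleftrightarrow> successively (\<or>) (up_steps (0 # ?ins j))" for j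
      using s(1,2) by (intro no_double_descent_iff_successively_0) (simp add: distinct_insert_at)
    then show ?thesis
      by (simp add: filter_map o_def uprun_eq_Suc_turns)
  qed
  ultimately have "mset (map uprun (filter (\<lambda>p. \<not> has_double_descent p) (map ?ins [0..<Suc n])))
      = image_mset Suc (mset (map turns (filter (successively (\<or>)) (insert_peaks (True # up_steps s)))))"
    using word_s by (simp add: multiset.map_comp)
  also have "\<dots> = image_mset Suc (replicate_mset ((c + 2) div 2) c + {#c + 1#}
      + replicate_mset (length (up_steps s) - c) (c + 2))"
  proof -
    have "successively (\<or>) (True # up_steps s)"
      using RS_no_double_descent[OF assms(1)] s(1) word_s
      by (simp add: no_double_descent_iff_successively_0)
    then show ?thesis
      unfolding c_def by (simp only: turns_of_admissible_insert_peaks)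
  qed
  moreover have "uprun s = Suc c"
    using word_s by (simp add: uprun_eq_Suc_turns c_def)
  ultimately show ?thesis
    using s(3) assms(2) by simp
qed

section \<open>The recurrence\<close>

lemma count_mset_map_filter_map_upt:
  "count (mset (map f (filter P (map g [0..<m])))) k = card {j. j < m \<and> P (g j) \<and> f (g j) = k}"
proof -
  have "count (mset (map f (filter P (map g [0..<m])))) k
      = length (filter (\<lambda>j. P (g j) \<and> k = f (g j)) [0..<m])"
    by (simp only: count_mset count_list_eq_length_filter filter_map length_map filter_filter o_def)
  also have "\<dots> = card {j. j < m \<and> P (g j) \<and> f (g j) = k}"
    unfolding length_filter_conv_card by (rule arg_cong[where f = card]) auto
  finally show ?thesis .
qed

lemma card_RS_Suc_uprun_recurrence:
  assumes "n \<ge> 1"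
  shows "card {p \<in> RS (Suc n). uprun p = k}
    = (k + 1) div 2 * card {s \<in> RS n. uprun s = k} + card {s \<in> RS n. uprun s + 1 = k}
      + (n + 2 - k) * card {s \<in> RS n. uprun s + 2 = k}"
proof -
  have sum_if_const: "(\<Sum>s\<in>RS n. if P s then c else 0) = c * card {s \<in> RS n. P s}" for P and c :: nat
    by (simp add: sum.inter_filter[symmetric] finite_RS)
  have "card {p \<in> RS (Suc n). uprun p = k} = (\<Sum>s\<in>RS n.
      count (mset (map uprun (filter (\<lambda>p. \<not> has_double_descent p)
        (map (\<lambda>j. insert_at (Suc n) j s) [0..<Suc n])))) k)"
    unfolding card_RS_Suc_uprun count_mset_map_filter_map_upt less_Suc_eq_le ..
  also have "\<dots> = (\<Sum>s\<in>RS n. (if uprun s = k then (k + 1) div 2 else 0)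
      + (if uprun s + 1 = k then 1 else 0) + (if uprun s + 2 = k then n + 2 - k else 0))"
    using assms by (intro sum.cong refl) (simp only: uprun_of_max_insertions, auto)
  finally show ?thesis
    by (simp only: sum.distrib sum_if_const)
qed

lemma ceiling_half: "\<lceil>real_of_int k / 2\<rceil> = (k + 1) div 2"
proof -
  have "\<lceil>real_of_int k / 2\<rceil> = - (- k div 2)"
    using ceiling_divide_eq_div[of k 2] by simp
  also have "\<dots> = (k + 1) div 2"
    by presburger
  finally show ?thesis .
qed

lemma T_neg: "k < 0 \<Longrightarrow> T n k = 0"
  by (simp add: T_def)

lemma T_eq_card_RS:
  assumes "n \<ge> 1"
  shows "T n (int k - int d) = int (card {xs \<in> RS n. uprun xs + d = k})"
proof (cases "d \<le> k")
  case True
  then have "{xs \<in> RS n. int (uprun xs) = int k - int d} = {xs \<in> RS n. uprun xs + d = k}"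
    by auto
  then show ?thesis
    using assms by (simp add: T_def)
qed (use assms in \<open>auto simp: T_def\<close>)

lemma T_0: "T 0 k = of_bool (k = 0)"
  by (simp add: T_def)

lemma RS_1: "RS 1 = {[1]}"
proof (intro set_eqI iffI)
  fix xs assume "xs \<in> RS 1"
  then have "length xs = 1" "set xs = {1}"
    using RS_length by (auto simp: RS_def is_perm_def)
  then show "xs \<in> {[1]}"
    by (cases xs) auto
qed (simp add: RS_def is_perm_def simsun_def has_double_descent_short)

lemma T_1: "T 1 (int k) = of_bool (k = 1)"
proof -
  have "uprun [1] = 1"
    by (simp add: uprun_eq_Suc_turns)
  then have "{xs \<in> RS 1. uprun xs = k} = (if k = 1 then {[1]} else {})"
    unfolding RS_1 by auto
  then show ?thesis
    using T_eq_card_RS[of 1 k 0] by simp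
qed

lemma T_Suc_recurrence:
  assumes "m \<ge> 1"
  shows "T (Suc m) (int k) = \<lceil>real k / 2\<rceil> * T m (int k) + T m (int k - 1)
    + (int (Suc m) - int k + 1) * T m (int k - 2)"
proof -
  have "uprun s \<le> m" if "s \<in> RS m" for s
  proof -
    have "s \<noteq> []"
      using RS_length[OF that] assms by auto
    then show ?thesis
      using uprun_le_length RS_length[OF that] by metis
  qed
  then have empty: "{s \<in> RS m. uprun s + 2 = k} = {}" if "k > m + 2"
    using that by fastforce
  have factor: "int ((m + 2 - k) * card {s \<in> RS m. uprun s + 2 = k})
      = (int (Suc m) - int k + 1) * int (card {s \<in> RS m. uprun s + 2 = k})"
  proof (cases "k \<le> m + 2")
    case False
    then have "card {s \<in> RS m. uprun s + 2 = k} = 0"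
      by (simp only: empty[OF False[unfolded not_le]] card.empty)
    then show ?thesis
      by simp
  qed (simp add: of_nat_diff)
  have half: "int ((k + 1) div 2) = \<lceil>real k / 2\<rceil>"
    using ceiling_half[of "int k"] by (simp add: zdiv_int)
  have "T (Suc m) (int k) = int (card {p \<in> RS (Suc m). uprun p = k})"
    using T_eq_card_RS[of "Suc m" k 0] by simp
  also have "\<dots> = int ((k + 1) div 2) * int (card {s \<in> RS m. uprun s = k})
      + int (card {s \<in> RS m. uprun s + 1 = k})
      + int ((m + 2 - k) * card {s \<in> RS m. uprun s + 2 = k})"
    unfolding card_RS_Suc_uprun_recurrence[OF assms] by simp
  also have "\<dots> = \<lceil>real k / 2\<rceil> * T m (int k) + T m (int k - 1)
      + (int (Suc m) - int k + 1) * T m (int k - 2)"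
    using T_eq_card_RS[OF assms, of k 0] T_eq_card_RS[OF assms, of k 1] T_eq_card_RS[OF assms, of k 2]
    unfolding factor half by simp
  finally show ?thesis .
qed

theorem theorem9:
  shows "(\<forall>(n::nat) (k::int). n \<ge> 1 \<longrightarrow>
            T n k = \<lceil>real_of_int k / 2\<rceil> * T (n-1) k + T (n-1) (k-1)
                    + (int n - k + 1) * T (n-1) (k-2))
         \<and> T 0 0 = 1 \<and> (\<forall>k::int. k \<noteq> 0 \<longrightarrow> T 0 k = 0)"
proof (intro conjI allI impI)
  fix n :: nat and k :: int
  assume "n \<ge> 1"
  then obtain m where n: "n = Suc m"
    by (cases n) auto
  show "T n k = \<lceil>real_of_int k / 2\<rceil> * T (n-1) k + T (n-1) (k-1) + (int n - k + 1) * T (n-1) (k-2)"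
  proof (cases "k < 0")
    case True
    then show ?thesis
      by (simp add: T_neg)
  next
    case False
    define k' where "k' = nat k"
    with False have k: "k = int k'"
      by simp
    show ?thesis
    proof (cases "m = 0")
      case True
      then show ?thesis
        using T_1[of k'] unfolding n k True ceiling_half by (simp add: T_0) presburger
    next
      case False
      then show ?thesis
        using T_Suc_recurrence[of m k'] by (simp add: n k)
    qed
  qed
qed (simp_all add: T_0)

end
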